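(* (i) For each $k\in\mathbb{N}$ let $f_k=q_{A_k}(\cdot-a_k)+\langle b_k,\cdot\rangle+c_k$, where $A_k$ is a maximally monotone symmetric linear relation on $\mathbb{R}^n$, $a_k,b_k\in\mathbb{R}^n$, $c_k\in\mathbb{R}$. If $f_k$ epiconverges to $f$ and $f$ is proper, then $f=q_A(\cdot-a)+\langle b,\cdot\rangle+c$ for some maximally monotone symmetric linear relation $A$, $a,b\in\mathbb{R}^n$, $c\in\mathbb{R}$. (ii) For each $k$ let $f_k=q_{A_k}+c_k$ with $A_k$ a maximally monotone symmetric linear relation and $c_k\in\mathbb{R}$. If $f_k$ epiconverges to $f$ and $f$ is proper, then $f=q_A+c$ for some maximally monotone symmetric linear relation $A$ and $c\in\mathbb{R}$.
   Context: Linear relation: operator $\mathbb{R}^n\rightrightarrows\mathbb{R}^n$ with linear-subspace graph; monotone, maximally monotone and symmetric ($\langle x,y^*\rangle=\langle y,x^*\rangle$ on the graph) as usual. $q_A(x)=\frac12\langle x,Ax\rangle$ on $\operatorname{dom}A$, $\infty$ elsewhere. Epiconvergence means Painlevé–Kuratowski convergence of epigraphs. *)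

theory Defs
  imports "HOL-Analysis.Analysis"
begin

text \<open>A (set-valued) operator on R^n is represented by its graph, a set of pairs.\<close>

definition linear_relation :: "((real^('n::finite)) \<times> (real^'n)) set \<Rightarrow> bool" where
  "linear_relation A \<longleftrightarrow> subspace A"

definition monotone_op :: "((real^('n::finite)) \<times> (real^'n)) set \<Rightarrow> bool" where
  "monotone_op A \<longleftrightarrow> (\<forall>x x' y y'. (x, x') \<in> A \<longrightarrow> (y, y') \<in> A \<longrightarrow> inner (x - y) (x' - y') \<ge> 0)"

definition maximally_monotone :: "((real^('n::finite)) \<times> (real^'n)) set \<Rightarrow> bool" where
  "maximally_monotone A \<longleftrightarrow> monotone_op A \<and> (\<forall>B. monotone_op B \<and> A \<subseteq> B \<longrightarrow> B = A)"

definition symmetric_op :: "((real^('n::finite)) \<times> (real^'n)) set \<Rightarrow> bool" where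
  "symmetric_op A \<longleftrightarrow> (\<forall>x x' y y'. (x, x') \<in> A \<longrightarrow> (y, y') \<in> A \<longrightarrow> inner x y' = inner y x')"

text \<open>q_A(x) = 1/2 <x, Ax> on dom A, +\<infinity> elsewhere (well defined for symmetric A).\<close>
definition qA :: "((real^('n::finite)) \<times> (real^'n)) set \<Rightarrow> (real^'n) \<Rightarrow> ereal" where
  "qA A x = (if x \<in> Domain A then ereal (inner x (SOME y. (x, y) \<in> A) / 2) else \<infinity>)"

definition epigraph :: "('a \<Rightarrow> ereal) \<Rightarrow> ('a \<times> real) set" where
  "epigraph f = {(x, t). f x \<le> ereal t}"

definition PK_liminf :: "(nat \<Rightarrow> 'a::metric_space set) \<Rightarrow> 'a set" where
  "PK_liminf C = {z. \<forall>e>0. eventually (\<lambda>k. \<exists>y\<in>C k. dist y z < e) sequentially}"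

definition PK_limsup :: "(nat \<Rightarrow> 'a::metric_space set) \<Rightarrow> 'a set" where
  "PK_limsup C = {z. \<forall>e>0. frequently (\<lambda>k. \<exists>y\<in>C k. dist y z < e) sequentially}"

definition PK_converges :: "(nat \<Rightarrow> 'a::metric_space set) \<Rightarrow> 'a set \<Rightarrow> bool" where
  "PK_converges C D \<longleftrightarrow> PK_liminf C = D \<and> PK_limsup C = D"

definition epiconverges :: "(nat \<Rightarrow> 'a::metric_space \<Rightarrow> ereal) \<Rightarrow> ('a \<Rightarrow> ereal) \<Rightarrow> bool" where
  "epiconverges F f \<longleftrightarrow> PK_converges (\<lambda>k. epigraph (F k)) (epigraph f)"

definition proper_fun :: "('a \<Rightarrow> ereal) \<Rightarrow> bool" where
  "proper_fun f \<longleftrightarrow> (\<forall>x. f x \<noteq> -\<infinity>) \<and> (\<exists>x. f x \<noteq> \<infinity>)"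

definition mms_relation :: "((real^('n::finite)) \<times> (real^'n)) set \<Rightarrow> bool" where
  "mms_relation A \<longleftrightarrow> linear_relation A \<and> maximally_monotone A \<and> symmetric_op A"

end

(* Each F_k is quadratic along lines: on a segment of its domain it is the linear interpolation
   plus (s^2 - s) Q_k(y - x) with Q_k >= 0.  For x, y in dom f take recovery sequences
   X_k -> x, Y_k -> y and compare an inside point x + s(y - x) with an outside point
   x + s'(y - x): with the weights s(1 - s) and s'(s' - 1) the unknown curvatures Q_k(Y_k - X_k)
   cancel, and the liminf inequality of epi-convergence shows that on every line through dom f
   the second divided differences of f are smaller at outside points than at inside points.
   This forces f to be quadratic on such lines.  The curvatures Q_k(Y_k - X_k) then converge to
   the curvature of f, which is therefore translation invariant, so dom f = p + V for a subspace V
   and f(p + h) is a quadratic polynomial on V with positive semidefinite quadratic part B.  The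
   graph {(x, y). x in V, <y, v> = B x v for v in V} is a maximally monotone symmetric linear
   relation representing it.  If all F_k are even, so is f, and the linear part vanishes. *)

theory Submission
  imports Defs
begin

lemma PK_liminf_obtain_sequence:
  fixes C :: "nat \<Rightarrow> 'a::metric_space set"
  assumes "z \<in> PK_liminf C"
  obtains Y where "Y \<longlonglongrightarrow> z" "eventually (\<lambda>k. Y k \<in> C k) sequentially"
proof -
  have near: "eventually (\<lambda>k. \<exists>y\<in>C k. dist y z < e) sequentially" if "e > 0" for e
    using assms that unfolding PK_liminf_def by blast
  have nonempty: "eventually (\<lambda>k. C k \<noteq> {}) sequentially"
    using near[OF zero_less_one] by (rule eventually_mono) auto
  have infdist_lim: "(\<lambda>k. infdist z (C k)) \<longlonglongrightarrow> 0"
  proof (rule tendstoI)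
    fix e :: real assume "e > 0"
    show "eventually (\<lambda>k. dist (infdist z (C k)) 0 < e) sequentially"
      using near[OF \<open>e > 0\<close>]
    proof (rule eventually_mono)
      fix k assume "\<exists>y\<in>C k. dist y z < e"
      then obtain y where "y \<in> C k" "dist y z < e" by blast
      then have "infdist z (C k) < e" using infdist_le[of y "C k" z] by (simp add: dist_commute)
      then show "dist (infdist z (C k)) 0 < e" using infdist_nonneg[of z "C k"] by simp
    qed
  qed
  define Y where "Y k = (SOME y. y \<in> C k \<and> dist y z < infdist z (C k) + inverse (Suc k))" for k
  have Y: "Y k \<in> C k \<and> dist (Y k) z < infdist z (C k) + inverse (Suc k)" if "C k \<noteq> {}" for k
  proof -
    have "(INF y\<in>C k. dist z y) < infdist z (C k) + inverse (Suc k)"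
      using that infdist_notempty[of "C k" z] by simp
    moreover have "bdd_below ((\<lambda>y. dist z y) ` C k)" by (rule bdd_belowI[of _ 0]) auto
    ultimately have "\<exists>y. y \<in> C k \<and> dist y z < infdist z (C k) + inverse (Suc k)"
      using that by (simp add: cINF_less_iff dist_commute) blast
    then show ?thesis unfolding Y_def by (rule someI_ex)
  qed
  have "(\<lambda>k. dist (Y k) z) \<longlonglongrightarrow> 0"
  proof (rule tendsto_sandwich[of "\<lambda>_. 0" _ _ "\<lambda>k. infdist z (C k) + inverse (Suc k)"])
    show "eventually (\<lambda>k. dist (Y k) z \<le> infdist z (C k) + inverse (Suc k)) sequentially"
      using nonempty by (rule eventually_mono) (use Y less_imp_le in blast)
    show "(\<lambda>k. infdist z (C k) + inverse (Suc k)) \<longlonglongrightarrow> 0"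
      using tendsto_add[OF infdist_lim LIMSEQ_inverse_real_of_nat] by simp
  qed auto
  then have "Y \<longlonglongrightarrow> z" by (rule tendsto_dist_iff[THEN iffD2])
  moreover have "eventually (\<lambda>k. Y k \<in> C k) sequentially"
    using nonempty by (rule eventually_mono) (use Y in blast)
  ultimately show thesis by (rule that)
qed

lemma epiconverges_le_liminf:
  fixes F :: "nat \<Rightarrow> 'a::metric_space \<Rightarrow> ereal"
  assumes epi: "epiconverges F f" and "Z \<longlonglongrightarrow> z" and "r \<longlonglongrightarrow> \<rho>"
    and below: "frequently (\<lambda>k. F k (Z k) \<le> ereal (r k)) sequentially"
  shows "f z \<le> ereal \<rho>"
proof -
  have "(z, \<rho>) \<in> PK_limsup (\<lambda>k. epigraph (F k))"
    unfolding PK_limsup_def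
  proof safe
    fix e :: real assume "e > 0"
    have "(\<lambda>k. (Z k, r k)) \<longlonglongrightarrow> (z, \<rho>)" using assms(2,3) by (rule tendsto_Pair)
    then have "eventually (\<lambda>k. dist (Z k, r k) (z, \<rho>) < e) sequentially"
      using \<open>e > 0\<close> tendstoD by blast
    with below show "frequently (\<lambda>k. \<exists>y\<in>epigraph (F k). dist y (z, \<rho>) < e) sequentially"
      by (rule frequently_eventually_frequently[THEN frequently_elim1]) (auto simp: epigraph_def)
  qed
  then show ?thesis using epi by (auto simp: epiconverges_def PK_converges_def epigraph_def)
qed

lemma epiconverges_eventually_gt:
  fixes F :: "nat \<Rightarrow> 'a::metric_space \<Rightarrow> ereal"
  assumes "epiconverges F f" and "Z \<longlonglongrightarrow> z" and "ereal \<rho> < f z"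
  shows "eventually (\<lambda>k. ereal \<rho> < F k (Z k)) sequentially"
proof (rule ccontr)
  assume "\<not> ?thesis"
  then have "frequently (\<lambda>k. F k (Z k) \<le> ereal \<rho>) sequentially"
    by (simp add: not_eventually not_less)
  with epiconverges_le_liminf[OF assms(1,2) tendsto_const] assms(3) show False by fastforce
qed

lemma epiconverges_recovery_sequence:
  fixes F :: "nat \<Rightarrow> 'a::metric_space \<Rightarrow> ereal"
  assumes epi: "epiconverges F f" and fx: "f x = ereal v" and not_minf: "\<And>k y. F k y \<noteq> -\<infinity>"
  obtains X a where "X \<longlonglongrightarrow> x" "a \<longlonglongrightarrow> v" "eventually (\<lambda>k. F k (X k) = ereal (a k)) sequentially"
proof -
  have "(x, v) \<in> PK_liminf (\<lambda>k. epigraph (F k))"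
    using epi fx by (auto simp: epiconverges_def PK_converges_def epigraph_def)
  then obtain P where P: "P \<longlonglongrightarrow> (x, v)" "eventually (\<lambda>k. P k \<in> epigraph (F k)) sequentially"
    by (rule PK_liminf_obtain_sequence)
  define X where "X k = fst (P k)" for k
  define r where "r k = snd (P k)" for k
  define a where "a k = real_of_ereal (F k (X k))" for k
  have X: "X \<longlonglongrightarrow> x" and r: "r \<longlonglongrightarrow> v"
    using tendsto_fst[OF P(1)] tendsto_snd[OF P(1)] unfolding X_def r_def by simp_all
  have le: "eventually (\<lambda>k. F k (X k) \<le> ereal (r k)) sequentially"
    using P(2) by (rule eventually_mono) (auto simp: epigraph_def X_def r_def split: prod.splits)
  have eq: "eventually (\<lambda>k. F k (X k) = ereal (a k)) sequentially"
  proof (rule eventually_mono[OF le])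
    fix k assume "F k (X k) \<le> ereal (r k)"
    then show "F k (X k) = ereal (a k)" using not_minf[of k "X k"] unfolding a_def
      by (cases "F k (X k)") auto
  qed
  have "a \<longlonglongrightarrow> v"
  proof (rule tendstoI)
    fix e :: real assume "e > 0"
    have "eventually (\<lambda>k. ereal (v - e) < F k (X k)) sequentially"
      by (rule epiconverges_eventually_gt[OF epi X]) (use \<open>e > 0\<close> fx in simp)
    moreover have "eventually (\<lambda>k. dist (r k) v < e) sequentially" using r \<open>e > 0\<close> by (rule tendstoD)
    ultimately show "eventually (\<lambda>k. dist (a k) v < e) sequentially"
      using le eq by eventually_elim (simp add: dist_real_def abs_less_iff)
  qed
  then show thesis by (rule that[OF X _ eq])
qed

text \<open>Since (b - a) * \<phi> t - (b - t) * \<phi> a - (t - a) * \<phi> b is b - a times the deviation of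
  \<phi> t from the chord of \<phi> over [a, b], the condition chord_defect \<phi> a b u w \<le> 0 for a < u < b and
  w outside [a, b] says that the second divided difference of \<phi> at a, b, w is at most the one at
  a, b, u.\<close>

definition chord_defect :: "(real \<Rightarrow> real) \<Rightarrow> real \<Rightarrow> real \<Rightarrow> real \<Rightarrow> real \<Rightarrow> real" where
  "chord_defect \<phi> a b u w =
     (u - a) * (b - u) * ((b - a) * \<phi> w - (b - w) * \<phi> a - (w - a) * \<phi> b)
   + (w - a) * (w - b) * ((b - a) * \<phi> u - (b - u) * \<phi> a - (u - a) * \<phi> b)"

definition chord_condition :: "(real \<Rightarrow> real) \<Rightarrow> bool" where
  "chord_condition \<phi> \<longleftrightarrow>
     (\<forall>a b u w. a < u \<longrightarrow> u < b \<longrightarrow> (w < a \<or> b < w) \<longrightarrow> chord_defect \<phi> a b u w \<le> 0)"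

lemma chord_defect_diff_quadratic:
  "chord_defect (\<lambda>t. \<phi> t - (\<alpha> + \<beta> * t + \<gamma> * t * t)) a b u w = chord_defect \<phi> a b u w"
  by (simp add: chord_defect_def algebra_simps)

lemma chord_condition_zeros:
  assumes cc: "chord_condition \<psi>" and zeros: "\<psi> 0 = 0" "\<psi> 1 = 0" "\<psi> 2 = 0"
  shows "\<psi> t = 0"
proof -
  have E: "chord_defect \<psi> a b u w \<le> 0" if "a < u" "u < b" "w < a \<or> b < w" for a b u w
    using cc that unfolding chord_condition_def by blast
  \<comment> \<open>in each instance below three of the four points are zeros of \<psi>, and the defect is \<plusminus>2 \<psi> t\<close>
  consider "t < 0" | "0 < t" "t < 1" | "1 < t" "t < 2" | "2 < t" | "t = 0 \<or> t = 1 \<or> t = 2"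
    by linarith
  then show ?thesis
  proof cases
    case 1
    then show ?thesis
      using E[of 0 1 2 t] E[of t 0 1 2] zeros by (simp add: chord_defect_def algebra_simps)
  next
    case 2
    then show ?thesis
      using E[of 0 t 1 2] E[of t 1 2 0] zeros by (simp add: chord_defect_def algebra_simps)
  next
    case 3
    then show ?thesis
      using E[of 1 t 2 0] E[of 0 1 t 2] zeros by (simp add: chord_defect_def algebra_simps)
  next
    case 4
    then show ?thesis
      using E[of 0 1 2 t] E[of 1 2 t 0] zeros by (simp add: chord_defect_def algebra_simps)
  qed (use zeros in auto)
qed

lemma chord_condition_imp_quadratic:
  assumes "chord_condition \<phi>"
  shows "\<phi> t = \<phi> 0 + t * (\<phi> 1 - \<phi> 0) + t * (t - 1) * (\<phi> 0 - 2 * \<phi> 1 + \<phi> 2) / 2"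
proof -
  define \<gamma> where "\<gamma> = (\<phi> 0 - 2 * \<phi> 1 + \<phi> 2) / 2"
  define \<beta> where "\<beta> = \<phi> 1 - \<phi> 0 - \<gamma>"
  have "chord_condition (\<lambda>t. \<phi> t - (\<phi> 0 + \<beta> * t + \<gamma> * t * t))"
    using assms by (simp add: chord_condition_def chord_defect_diff_quadratic)
  then have "\<phi> t - (\<phi> 0 + \<beta> * t + \<gamma> * t * t) = 0"
    by (rule chord_condition_zeros) (simp_all add: \<beta>_def \<gamma>_def field_simps)
  moreover have "\<phi> 0 + \<beta> * t + \<gamma> * t * t
      = \<phi> 0 + t * (\<phi> 1 - \<phi> 0) + t * (t - 1) * (\<phi> 0 - 2 * \<phi> 1 + \<phi> 2) / 2"
    by (simp add: \<beta>_def \<gamma>_def field_simps)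
  ultimately show ?thesis by linarith
qed

locale quadratic_on_subspace =
  fixes V :: "'a::real_vector set" and g :: "'a \<Rightarrow> real" and q :: "'a \<Rightarrow> real"
  assumes subspace: "subspace V"
    and line: "\<And>x d t. x \<in> V \<Longrightarrow> d \<in> V \<Longrightarrow>
      g (x + t *\<^sub>R d) = (1 - t) * g x + t * g (x + d) + (t * t - t) * q d"
begin

definition B :: "'a \<Rightarrow> 'a \<Rightarrow> real" where
  "B u v = g (u + v) - g u - g v + g 0"

definition L :: "'a \<Rightarrow> real" where
  "L h = g h - g 0 - q h"

lemma second_difference:
  assumes x: "x \<in> V" and u: "u \<in> V" and v: "v \<in> V"
  shows "g (x + u + v) - g (x + u) - g (x + v) + g x = (q (u + v) - q (v - u)) / 2"
proof -
  have "x + (1/2) *\<^sub>R (u + v) = (x + u) + (1/2) *\<^sub>R (v - u)"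
    by (simp add: algebra_simps flip: scaleR_add_left)
  then have "g (x + (1/2) *\<^sub>R (u + v)) = g ((x + u) + (1/2) *\<^sub>R (v - u))" by (rule arg_cong)
  moreover have "g (x + (1/2) *\<^sub>R (u + v)) = g x / 2 + g (x + u + v) / 2 - q (u + v) / 4"
    using line[OF x subspace_add[OF subspace u v], of "1/2"] by (simp add: add.assoc)
  moreover have "g ((x + u) + (1/2) *\<^sub>R (v - u)) = g (x + u) / 2 + g (x + v) / 2 - q (v - u) / 4"
    using line[OF subspace_add[OF subspace x u] subspace_diff[OF subspace v u], of "1/2"] by simp
  ultimately show ?thesis by (simp add: field_simps)
qed

lemma B_translate: "x \<in> V \<Longrightarrow> u \<in> V \<Longrightarrow> v \<in> V \<Longrightarrow> B u v = g (x + u + v) - g (x + u) - g (x + v) + g x"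
  using second_difference[of x u v] second_difference[of 0 u v] subspace_0[OF subspace]
  by (simp add: B_def)

lemma B_commute: "B u v = B v u"
  by (simp add: B_def add.commute)

lemma B_add_right:
  assumes "u \<in> V" "v \<in> V" "w \<in> V"
  shows "B u (v + w) = B u v + B u w"
  using B_translate[of v u w] assms by (simp add: B_def algebra_simps)

lemma B_scale_right:
  assumes u: "u \<in> V" and v: "v \<in> V"
  shows "B u (t *\<^sub>R v) = t * B u v"
  using line[OF u v, of t] line[OF subspace_0[OF subspace] v, of t]
  by (simp add: B_def algebra_simps)

lemma B_diag: "h \<in> V \<Longrightarrow> B h h = 2 * q h"
  using line[OF subspace_0[OF subspace], of h 2] by (simp add: B_def scaleR_2)

lemma q_scale:
  assumes h: "h \<in> V"
  shows "q (t *\<^sub>R h) = t * t * q h"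
proof -
  have th: "t *\<^sub>R h \<in> V" using subspace_scale[OF subspace h] .
  have "2 * q (t *\<^sub>R h) = B (t *\<^sub>R h) (t *\<^sub>R h)" using B_diag[OF th] by simp
  also have "\<dots> = t * B h (t *\<^sub>R h)" using B_scale_right[OF th h] B_commute by metis
  also have "\<dots> = t * t * B h h" using B_scale_right[OF h h] by simp
  finally show ?thesis using B_diag[OF h] by simp
qed

lemma L_add:
  assumes u: "u \<in> V" and v: "v \<in> V"
  shows "L (u + v) = L u + L v"
proof -
  have uv: "u + v \<in> V" using subspace_add[OF subspace u v] .
  have "2 * q (u + v) = B (u + v) u + B (u + v) v"
    using B_diag[OF uv] B_add_right[OF uv u v] by simp
  also have "\<dots> = B u u + B u v + B v u + B v v"
    using B_add_right[OF u u v] B_add_right[OF v u v] B_commute[of "u + v"] by simp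
  finally have "q (u + v) = q u + q v + B u v"
    using B_diag[OF u] B_diag[OF v] B_commute[of v u] by simp
  then show ?thesis by (simp add: L_def B_def)
qed

lemma L_scale:
  assumes h: "h \<in> V"
  shows "L (t *\<^sub>R h) = t * L h"
  using line[OF subspace_0[OF subspace] h, of t] q_scale[OF h, of t]
  by (simp add: L_def algebra_simps)

lemma g_eq: "h \<in> V \<Longrightarrow> g h = g 0 + L h + B h h / 2"
  by (simp add: L_def B_diag)

end

lemma subspace_functional_eq_inner:
  fixes V :: "'a::euclidean_space set"
  assumes V: "subspace V"
    and add: "\<And>x y. x \<in> V \<Longrightarrow> y \<in> V \<Longrightarrow> l (x + y) = l x + l y"
    and scale: "\<And>c x. x \<in> V \<Longrightarrow> l (c *\<^sub>R x) = c * l x"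
  obtains y where "\<And>v. v \<in> V \<Longrightarrow> inner y v = l v"
proof -
  obtain U where U: "U \<subseteq> V" "pairwise orthogonal U" "\<And>u. u \<in> U \<Longrightarrow> norm u = 1"
    "independent U" "span U = V"
    using orthonormal_basis_subspace[OF V] by metis
  have fin: "finite U" using U(4) by (rule finiteI_independent)
  define y where "y = (\<Sum>u\<in>U. l u *\<^sub>R u)"
  have on_basis: "inner y u = l u" if u: "u \<in> U" for u
  proof -
    have "inner y u = (\<Sum>u'\<in>U. l u' * inner u' u)" by (simp add: y_def inner_sum_left)
    also have "\<dots> = l u * inner u u"
      using U(2) u by (subst sum.remove[OF fin u]) (auto intro!: sum.neutral simp: pairwise_def orthogonal_def)
    also have "inner u u = 1" using U(3)[OF u] by (simp add: norm_eq_1)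
    finally show ?thesis by simp
  qed
  have l0: "l 0 = 0" using scale[of 0 0] subspace_0[OF V] by simp
  have "v \<in> V \<and> inner y v = l v" if "v \<in> V" for v
  proof (rule span_induct[of v U])
    show "v \<in> span U" using that U(5) by simp
    show "subspace {v. v \<in> V \<and> inner y v = l v}"
      using V l0 by (auto simp: subspace_def add scale inner_add_right subspace_add subspace_scale)
    show "u \<in> U \<Longrightarrow> u \<in> V \<and> inner y u = l u" for u using U(1) on_basis by blast
  qed
  then show thesis using that by blast
qed

lemma affine_nonneg_slope_zero:
  fixes \<alpha> \<beta> :: real
  assumes "\<And>t. 0 \<le> \<alpha> - t * \<beta>"
  shows "\<beta> = 0"
proof (rule ccontr)
  assume "\<beta> \<noteq> 0"
  then have "\<alpha> - ((\<alpha> + 1) / \<beta>) * \<beta> = -1" by simp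
  with assms[of "(\<alpha> + 1) / \<beta>"] show False by simp
qed

lemma quadratic_nonneg_slope_zero:
  fixes \<beta> \<gamma> :: real
  assumes "0 \<le> \<gamma>" and "\<And>t. 0 \<le> t * t * \<gamma> - t * \<beta>"
  shows "\<beta> = 0"
proof (rule ccontr)
  assume "\<beta> \<noteq> 0"
  define t where "t = \<beta> / (\<gamma> + 1)"
  have "t * \<gamma> - \<beta> = - t" using assms(1) by (simp add: t_def field_simps)
  then have "t * t * \<gamma> - t * \<beta> = - (t * t)" by (metis mult.assoc right_diff_distrib mult_minus_right)
  moreover have "t \<noteq> 0" using \<open>\<beta> \<noteq> 0\<close> assms(1) by (simp add: t_def)
  then have "t * t > 0" by (metis not_real_square_gt_zero)
  ultimately show False using assms(2)[of t] by simp
qed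

lemma qA_eq:
  assumes A: "subspace A" "symmetric_op A" and xy: "(x, y) \<in> A"
  shows "qA A x = ereal (inner x y / 2)"
proof -
  define y' where "y' = (SOME y. (x, y) \<in> A)"
  have xy': "(x, y') \<in> A" unfolding y'_def using xy by (rule someI)
  have "(0, y - y') \<in> A" using subspace_diff[OF A(1) xy xy'] by simp
  then have "inner x (y - y') = inner 0 y'" using A(2) xy' unfolding symmetric_op_def by blast
  then have "inner x y = inner x y'" by (simp add: inner_diff_right)
  then show ?thesis using xy by (auto simp: qA_def y'_def[symmetric])
qed

lemma qA_uminus:
  assumes A: "subspace A" "symmetric_op A"
  shows "qA A (- x) = qA A x"
proof -
  have neg: "(- x, - y) \<in> A" if "(x, y) \<in> A" for x y
    using subspace_neg[OF A(1) that] by simp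
  then have dom: "- x \<in> Domain A \<longleftrightarrow> x \<in> Domain A" by (metis Domain.simps minus_minus)
  show ?thesis
  proof (cases "x \<in> Domain A")
    case True
    then obtain y where xy: "(x, y) \<in> A" by auto
    then show ?thesis using qA_eq[OF A xy] qA_eq[OF A neg[OF xy]] by simp
  next
    case False
    with dom show ?thesis by (simp add: qA_def)
  qed
qed

locale psd_form =
  fixes V :: "(real^'n::finite) set" and B :: "real^'n \<Rightarrow> real^'n \<Rightarrow> real"
  assumes subspace: "subspace V"
    and add_right: "\<And>u v w. u \<in> V \<Longrightarrow> v \<in> V \<Longrightarrow> w \<in> V \<Longrightarrow> B u (v + w) = B u v + B u w"
    and scale_right: "\<And>u v t. u \<in> V \<Longrightarrow> v \<in> V \<Longrightarrow> B u (t *\<^sub>R v) = t * B u v"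
    and commute: "\<And>u v. u \<in> V \<Longrightarrow> v \<in> V \<Longrightarrow> B u v = B v u"
    and nonneg: "\<And>h. h \<in> V \<Longrightarrow> 0 \<le> B h h"
begin

definition graph :: "((real^'n) \<times> (real^'n)) set" where
  "graph = {(x, y). x \<in> V \<and> (\<forall>v\<in>V. inner y v = B x v)}"

lemma add_left: "u \<in> V \<Longrightarrow> v \<in> V \<Longrightarrow> w \<in> V \<Longrightarrow> B (u + v) w = B u w + B v w"
  using add_right commute subspace_add[OF subspace] by metis

lemma scale_left: "u \<in> V \<Longrightarrow> v \<in> V \<Longrightarrow> B (t *\<^sub>R u) v = t * B u v"
  using scale_right commute subspace_scale[OF subspace] by metis

lemma diff_left: "u \<in> V \<Longrightarrow> v \<in> V \<Longrightarrow> w \<in> V \<Longrightarrow> B (u - v) w = B u w - B v w"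
  using add_left[of u "- v" w] scale_left[of v w "-1"] subspace_neg[OF subspace, of v] by simp

lemma Domain_graph: "Domain graph = V"
proof -
  have "\<exists>y. (x, y) \<in> graph" if x: "x \<in> V" for x
  proof -
    obtain y where "\<And>v. v \<in> V \<Longrightarrow> inner y v = B x v"
      using subspace_functional_eq_inner[OF subspace, of "B x"] add_right[OF x] scale_right[OF x]
      by blast
    then show ?thesis using x by (auto simp: graph_def)
  qed
  then show ?thesis by (auto simp: graph_def)
qed

lemma zero_left: "v \<in> V \<Longrightarrow> B 0 v = 0"
  using scale_left[of 0 v 0] subspace_0[OF subspace] by simp

lemma subspace_graph: "subspace graph"
  unfolding subspace_def graph_def
  using subspace subspace_0 subspace_add subspace_scale add_left scale_left zero_left
  by (auto simp: zero_prod_def inner_add_left)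

lemma symmetric_graph: "symmetric_op graph"
  unfolding symmetric_op_def graph_def using commute by (auto simp: inner_commute)

lemma monotone_graph: "monotone_op graph"
  unfolding monotone_op_def
proof (intro allI impI)
  fix x x' y y' assume xy: "(x, x') \<in> graph" "(y, y') \<in> graph"
  then have V: "x \<in> V" "y \<in> V" "x - y \<in> V" by (auto simp: graph_def subspace_diff[OF subspace])
  have "inner (x - y) (x' - y') = inner x' (x - y) - inner y' (x - y)"
    by (simp add: inner_diff_left inner_diff_right inner_commute)
  also have "\<dots> = B (x - y) (x - y)" using xy V by (auto simp: graph_def diff_left)
  finally show "0 \<le> inner (x - y) (x' - y')" using nonneg[OF V(3)] by simp
qed

lemma mem_graph_if_monotonically_related:
  assumes rel: "\<And>x y. (x, y) \<in> graph \<Longrightarrow> 0 \<le> inner (u - x) (w - y)"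
  shows "(u, w) \<in> graph"
proof -
  have "u \<in> V\<^sup>\<bottom>\<^sup>\<bottom>"
  proof (unfold orthogonal_comp_def, safe)
    fix z assume z: "\<forall>v\<in>V. orthogonal v z"
    have "(0, t *\<^sub>R z) \<in> graph" for t
      using z subspace_0[OF subspace] zero_left
      by (auto simp: graph_def orthogonal_def inner_commute)
    then have "0 \<le> inner u w - t * inner u z" for t
      using rel by (fastforce simp: inner_diff_right)
    then show "orthogonal z u"
      using affine_nonneg_slope_zero by (auto simp: orthogonal_def inner_commute)
  qed
  then have u: "u \<in> V" by (simp add: orthogonal_comp_self[OF subspace])
  then obtain yu where yu: "(u, yu) \<in> graph" using Domain_graph by blast
  have "inner w v = B u v" if v: "v \<in> V" for v
  proof -
    obtain yv where yv: "(v, yv) \<in> graph" using Domain_graph v by blast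
    have "(u, yu) + t *\<^sub>R (v, yv) \<in> graph" for t
      by (rule subspace_add[OF subspace_graph yu subspace_scale[OF subspace_graph yv]])
    then have "0 \<le> inner (- t *\<^sub>R v) (w - yu - t *\<^sub>R yv)" for t
      using rel[of "u + t *\<^sub>R v" "yu + t *\<^sub>R yv"] by (simp add: algebra_simps)
    then have "0 \<le> t * t * inner v yv - t * inner v (w - yu)" for t
      by (simp add: inner_diff_right algebra_simps)
    moreover have "0 \<le> inner v yv" using yv v nonneg by (auto simp: graph_def inner_commute)
    ultimately have "inner v (w - yu) = 0" using quadratic_nonneg_slope_zero by blast
    then show ?thesis using yu v by (auto simp: graph_def inner_diff_right inner_commute)
  qed
  with u show ?thesis by (simp add: graph_def)
qed

lemma mms_relation_graph: "mms_relation graph"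
  unfolding mms_relation_def linear_relation_def maximally_monotone_def
proof (intro conjI allI impI subspace_graph monotone_graph symmetric_graph)
  fix C assume C: "monotone_op C \<and> graph \<subseteq> C"
  show "C = graph"
  proof
    show "C \<subseteq> graph"
    proof safe
      fix u w assume "(u, w) \<in> C"
      with C show "(u, w) \<in> graph"
        by (intro mem_graph_if_monotonically_related) (auto simp: monotone_op_def)
    qed
  qed (use C in blast)
qed

lemma qA_graph: "qA graph h = (if h \<in> V then ereal (B h h / 2) else \<infinity>)"
proof (cases "h \<in> V")
  case True
  then obtain y where hy: "(h, y) \<in> graph" using Domain_graph by blast
  then have "inner h y = B h h" using True by (auto simp: graph_def inner_commute)
  then show ?thesis using qA_eq[OF subspace_graph symmetric_graph hy] True by simp
qed (simp add: qA_def Domain_graph)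

end

definition quadratic_along_lines :: "('a::real_vector \<Rightarrow> ereal) \<Rightarrow> ('a \<Rightarrow> real) \<Rightarrow> bool" where
  "quadratic_along_lines F Q \<longleftrightarrow> (\<forall>x. F x \<noteq> -\<infinity>) \<and> (\<forall>d. 0 \<le> Q d) \<and>
     (\<forall>x y s. F x \<noteq> \<infinity> \<longrightarrow> F y \<noteq> \<infinity> \<longrightarrow>
        F (x + s *\<^sub>R (y - x)) =
          ereal ((1 - s) * real_of_ereal (F x) + s * real_of_ereal (F y) + (s * s - s) * Q (y - x)))"

lemma quadratic_along_lines_qA:
  assumes lin: "linear_relation A" and mono: "monotone_op A" and sym: "symmetric_op A"
  shows "quadratic_along_lines (\<lambda>x. qA A (x - a) + ereal (inner b x) + ereal c)
    (\<lambda>d. real_of_ereal (qA A d))"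
proof -
  have sub: "subspace A" using lin by (simp add: linear_relation_def)
  note q = qA_eq[OF sub sym]
  have nonneg: "0 \<le> real_of_ereal (qA A d)" for d
  proof (cases "d \<in> Domain A")
    case True
    then obtain d' where dd: "(d, d') \<in> A" by auto
    have "(0, 0) \<in> A" using subspace_0[OF sub] by (simp add: zero_prod_def)
    then have "0 \<le> inner d d'" using mono dd unfolding monotone_op_def by fastforce
    then show ?thesis using q[OF dd] by simp
  qed (simp add: qA_def)
  have line: "qA A (x + s *\<^sub>R (y - x) - a) + ereal (inner b (x + s *\<^sub>R (y - x))) + ereal c =
      ereal ((1 - s) * real_of_ereal (qA A (x - a) + ereal (inner b x) + ereal c)
        + s * real_of_ereal (qA A (y - a) + ereal (inner b y) + ereal c)
        + (s * s - s) * real_of_ereal (qA A (y - x)))"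
    if "qA A (x - a) \<noteq> \<infinity>" "qA A (y - a) \<noteq> \<infinity>" for x y s
  proof -
    have "x - a \<in> Domain A" "y - a \<in> Domain A" using that by (auto simp: qA_def split: if_splits)
    then obtain x' y' where xa: "(x - a, x') \<in> A" and ya: "(y - a, y') \<in> A" by blast
    have d: "(y - x, y' - x') \<in> A" using subspace_diff[OF sub ya xa] by simp
    have "(x - a, x') + s *\<^sub>R (y - x, y' - x') \<in> A"
      by (rule subspace_add[OF sub xa subspace_scale[OF sub d]])
    then have z: "(x + s *\<^sub>R (y - x) - a, x' + s *\<^sub>R (y' - x')) \<in> A" by (simp add: algebra_simps)
    have "inner (x - a) (y' - x') = inner (y - x) x'"
      using sym xa d unfolding symmetric_op_def by blast
    then show ?thesis
      unfolding q[OF z] q[OF xa] q[OF ya] q[OF d]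
      by (simp add: inner_add_left inner_add_right inner_diff_left inner_diff_right algebra_simps)
        (simp add: field_simps)
  qed
  show ?thesis
    unfolding quadratic_along_lines_def using nonneg line by (simp add: qA_def)
qed

lemma tendsto_line_point:
  fixes X Y :: "nat \<Rightarrow> 'a::real_normed_vector"
  assumes "X \<longlonglongrightarrow> x" "Y \<longlonglongrightarrow> y"
  shows "(\<lambda>k. X k + s *\<^sub>R (Y k - X k)) \<longlonglongrightarrow> x + s *\<^sub>R (y - x)"
  using assms by (intro tendsto_intros)

lemma line_point_reparam:
  fixes x y :: "'a::real_vector"
  shows "x + a *\<^sub>R (y - x) + s *\<^sub>R ((x + b *\<^sub>R (y - x)) - (x + a *\<^sub>R (y - x)))
    = x + (a + s * (b - a)) *\<^sub>R (y - x)"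
  by (simp add: algebra_simps)

locale epi_limit_quadratic =
  fixes F :: "nat \<Rightarrow> 'a::real_normed_vector \<Rightarrow> ereal" and Q :: "nat \<Rightarrow> 'a \<Rightarrow> real"
    and f :: "'a \<Rightarrow> ereal"
  assumes quadratic: "\<And>k. quadratic_along_lines (F k) (Q k)"
    and epi: "epiconverges F f" and proper: "proper_fun f"
begin

definition rf :: "'a \<Rightarrow> real" where
  "rf x = real_of_ereal (f x)"

lemma f_eq_rf: "f x \<noteq> \<infinity> \<Longrightarrow> f x = ereal (rf x)"
  using proper unfolding proper_fun_def rf_def by (cases "f x") auto

lemma F_not_minf: "F k x \<noteq> -\<infinity>"
  using quadratic[of k] by (simp add: quadratic_along_lines_def)

lemma Q_nonneg: "0 \<le> Q k d"
  using quadratic[of k] by (simp add: quadratic_along_lines_def)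

lemma F_line:
  "F k x \<noteq> \<infinity> \<Longrightarrow> F k y \<noteq> \<infinity> \<Longrightarrow> F k (x + s *\<^sub>R (y - x)) =
    ereal ((1 - s) * real_of_ereal (F k x) + s * real_of_ereal (F k y) + (s * s - s) * Q k (y - x))"
  using quadratic[of k] by (simp add: quadratic_along_lines_def)

definition recovery :: "(nat \<Rightarrow> 'a) \<Rightarrow> 'a \<Rightarrow> (nat \<Rightarrow> real) \<Rightarrow> bool" where
  "recovery X x a \<longleftrightarrow> f x \<noteq> \<infinity> \<and> X \<longlonglongrightarrow> x \<and> a \<longlonglongrightarrow> rf x \<and>
     eventually (\<lambda>k. F k (X k) = ereal (a k)) sequentially"

lemma obtain_recovery:
  assumes "f x \<noteq> \<infinity>"
  obtains X a where "recovery X x a"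
  using epiconverges_recovery_sequence[OF epi f_eq_rf[OF assms] F_not_minf] assms
  unfolding recovery_def by metis

lemma recovery_line_eq:
  assumes "recovery X x a" "recovery Y y b"
  shows "eventually (\<lambda>k. \<forall>s. F k (X k + s *\<^sub>R (Y k - X k)) =
    ereal ((1 - s) * a k + s * b k + (s * s - s) * Q k (Y k - X k))) sequentially"
proof -
  have "eventually (\<lambda>k. F k (X k) = ereal (a k) \<and> F k (Y k) = ereal (b k)) sequentially"
    using assms unfolding recovery_def by (auto intro: eventually_conj)
  then show ?thesis by (rule eventually_mono) (simp add: F_line)
qed

lemma f_segment_le:
  assumes "f x \<noteq> \<infinity>" "f y \<noteq> \<infinity>" and s: "0 \<le> s" "s \<le> 1"
  shows "f (x + s *\<^sub>R (y - x)) \<le> ereal ((1 - s) * rf x + s * rf y)"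
proof -
  obtain X a Y b where X: "recovery X x a" and Y: "recovery Y y b"
    using obtain_recovery assms(1,2) by metis
  have neg: "(s * s - s) * Q k d \<le> 0" for k d
    using s by (intro mult_nonpos_nonneg Q_nonneg) (simp add: mult_left_le_one_le)
  have "eventually (\<lambda>k. F k (X k + s *\<^sub>R (Y k - X k)) \<le> ereal ((1 - s) * a k + s * b k)) sequentially"
    using recovery_line_eq[OF X Y]
  proof (rule eventually_mono)
    fix k
    assume "\<forall>s. F k (X k + s *\<^sub>R (Y k - X k)) =
      ereal ((1 - s) * a k + s * b k + (s * s - s) * Q k (Y k - X k))"
    then show "F k (X k + s *\<^sub>R (Y k - X k)) \<le> ereal ((1 - s) * a k + s * b k)"
      using neg[of k "Y k - X k"] by simp
  qed
  then show ?thesis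
    using X Y unfolding recovery_def
    by (intro epiconverges_le_liminf[OF epi tendsto_line_point _ eventually_frequently])
      (auto intro!: tendsto_intros)
qed

lemma weighted_limit_bound:
  assumes "Z \<longlonglongrightarrow> z" "Z' \<longlonglongrightarrow> z'"
    and "eventually (\<lambda>k. F k (Z k) = ereal (u k)) sequentially"
    and "eventually (\<lambda>k. F k (Z' k) = ereal (w k)) sequentially"
    and "\<mu> > 0" "\<nu> > 0" and "(\<lambda>k. \<mu> * w k + \<nu> * u k) \<longlonglongrightarrow> R"
    and "ereal \<rho>' < f z'" "ereal \<rho> < f z"
  shows "\<mu> * \<rho>' + \<nu> * \<rho> \<le> R"
proof (rule ccontr)
  assume "\<not> ?thesis"
  then have "eventually (\<lambda>k. \<mu> * w k + \<nu> * u k < \<mu> * \<rho>' + \<nu> * \<rho>) sequentially"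
    using assms(7) by (intro order_tendstoD) auto
  moreover have "eventually (\<lambda>k. ereal \<rho>' < F k (Z' k)) sequentially"
    "eventually (\<lambda>k. ereal \<rho> < F k (Z k)) sequentially"
    using epiconverges_eventually_gt[OF epi] assms(1,2,8,9) by auto
  ultimately have "eventually (\<lambda>k. False) sequentially"
    using assms(3,4)
  proof eventually_elim
    case (elim k)
    then have "\<rho>' < w k" "\<rho> < u k" by auto
    with assms(5,6) have "\<mu> * \<rho>' < \<mu> * w k" "\<nu> * \<rho> < \<nu> * u k" by auto
    with elim(1) show False by linarith
  qed
  then show False by simp
qed

lemma outside_segment_bound:
  assumes "f x \<noteq> \<infinity>" "f y \<noteq> \<infinity>" and s: "0 < s" "s < 1" and s': "s' < 0 \<or> 1 < s'"
    and "ereal \<rho>' < f (x + s' *\<^sub>R (y - x))" "ereal \<rho> < f (x + s *\<^sub>R (y - x))"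
  shows "s * (1 - s) * \<rho>' + s' * (s' - 1) * \<rho>
    \<le> s * (1 - s) * ((1 - s') * rf x + s' * rf y) + s' * (s' - 1) * ((1 - s) * rf x + s * rf y)"
proof -
  obtain X a Y b where X: "recovery X x a" and Y: "recovery Y y b"
    using obtain_recovery assms(1,2) by metis
  define u where "u k = (1 - s) * a k + s * b k + (s * s - s) * Q k (Y k - X k)" for k
  define w where "w k = (1 - s') * a k + s' * b k + (s' * s' - s') * Q k (Y k - X k)" for k
  \<comment> \<open>the weights are chosen so that the unknown curvatures Q k (Y k - X k) cancel\<close>
  have "(\<lambda>k. s * (1 - s) * w k + s' * (s' - 1) * u k)
      = (\<lambda>k. s * (1 - s) * ((1 - s') * a k + s' * b k) + s' * (s' - 1) * ((1 - s) * a k + s * b k))"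
    by (simp add: u_def w_def algebra_simps)
  also have "\<dots> \<longlonglongrightarrow> s * (1 - s) * ((1 - s') * rf x + s' * rf y) + s' * (s' - 1) * ((1 - s) * rf x + s * rf y)"
    using X Y unfolding recovery_def by (intro tendsto_intros) auto
  finally have lim: "(\<lambda>k. s * (1 - s) * w k + s' * (s' - 1) * u k) \<longlonglongrightarrow>
      s * (1 - s) * ((1 - s') * rf x + s' * rf y) + s' * (s' - 1) * ((1 - s) * rf x + s * rf y)" .
  show ?thesis
  proof (rule weighted_limit_bound[OF _ _ _ _ _ _ lim assms(6,7)])
    show "(\<lambda>k. X k + s *\<^sub>R (Y k - X k)) \<longlonglongrightarrow> x + s *\<^sub>R (y - x)"
      "(\<lambda>k. X k + s' *\<^sub>R (Y k - X k)) \<longlonglongrightarrow> x + s' *\<^sub>R (y - x)"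
      using X Y unfolding recovery_def by (auto intro: tendsto_line_point)
    show "eventually (\<lambda>k. F k (X k + s *\<^sub>R (Y k - X k)) = ereal (u k)) sequentially"
      "eventually (\<lambda>k. F k (X k + s' *\<^sub>R (Y k - X k)) = ereal (w k)) sequentially"
      using recovery_line_eq[OF X Y] unfolding u_def w_def by (auto elim: eventually_mono)
    show "s * (1 - s) > 0" "s' * (s' - 1) > 0" using s s' by (auto simp: mult_neg_neg)
  qed
qed

lemma outside_segment:
  assumes fx: "f x \<noteq> \<infinity>" and fy: "f y \<noteq> \<infinity>" and s: "0 < s" "s < 1" and s': "s' < 0 \<or> 1 < s'"
  shows "f (x + s' *\<^sub>R (y - x)) \<noteq> \<infinity>"
    and "s * (1 - s) * rf (x + s' *\<^sub>R (y - x)) + s' * (s' - 1) * rf (x + s *\<^sub>R (y - x))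
      \<le> s * (1 - s) * ((1 - s') * rf x + s' * rf y) + s' * (s' - 1) * ((1 - s) * rf x + s * rf y)"
proof -
  define \<mu> where "\<mu> = s * (1 - s)"
  define \<nu> where "\<nu> = s' * (s' - 1)"
  define R where "R = \<mu> * ((1 - s') * rf x + s' * rf y) + \<nu> * ((1 - s) * rf x + s * rf y)"
  define z where "z = x + s *\<^sub>R (y - x)"
  define z' where "z' = x + s' *\<^sub>R (y - x)"
  have \<mu>\<nu>: "\<mu> > 0" "\<nu> > 0" unfolding \<mu>_def \<nu>_def using s s' by (auto simp: mult_neg_neg)
  have bound: "\<mu> * \<rho>' + \<nu> * \<rho> \<le> R" if "ereal \<rho>' < f z'" "ereal \<rho> < f z" for \<rho>' \<rho>
    using outside_segment_bound[OF fx fy s s'] that by (simp add: \<mu>_def \<nu>_def R_def z_def z'_def)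
  have fz: "f z = ereal (rf z)"
    using f_segment_le[OF fx fy, of s] s by (intro f_eq_rf) (auto simp: z_def)
  show fz': "f z' \<noteq> \<infinity>"
  proof
    assume "f z' = \<infinity>"
    then have "\<mu> * ((R + 1 - \<nu> * (rf z - 1)) / \<mu>) + \<nu> * (rf z - 1) \<le> R"
      using fz by (intro bound) auto
    with \<mu>\<nu> show False by simp
  qed
  have "\<mu> * rf z' + \<nu> * rf z \<le> R"
  proof (rule field_le_epsilon)
    fix e :: real assume "e > 0"
    define \<delta> where "\<delta> = e / (\<mu> + \<nu>)"
    have "\<delta> > 0" using \<open>e > 0\<close> \<mu>\<nu> by (simp add: \<delta>_def)
    then have "\<mu> * (rf z' - \<delta>) + \<nu> * (rf z - \<delta>) \<le> R"
      using fz f_eq_rf[OF fz'] by (intro bound) auto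
    moreover have "(\<mu> + \<nu>) * \<delta> = e" using \<mu>\<nu> by (simp add: \<delta>_def)
    ultimately show "\<mu> * rf z' + \<nu> * rf z \<le> R + e" by (simp add: algebra_simps)
  qed
  then show "s * (1 - s) * rf z' + s' * (s' - 1) * rf z
      \<le> s * (1 - s) * ((1 - s') * rf x + s' * rf y) + s' * (s' - 1) * ((1 - s) * rf x + s * rf y)"
    by (simp add: \<mu>_def \<nu>_def R_def)
qed

lemma f_line_finite:
  assumes "f x \<noteq> \<infinity>" "f y \<noteq> \<infinity>"
  shows "f (x + t *\<^sub>R (y - x)) \<noteq> \<infinity>"
proof (cases "0 \<le> t \<and> t \<le> 1")
  case True
  then show ?thesis using f_segment_le[OF assms, of t] by auto
next
  case False
  then show ?thesis using outside_segment(1)[OF assms, of "1/2" t] by auto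
qed

lemma chord_condition_on_line:
  assumes fx: "f x \<noteq> \<infinity>" and fy: "f y \<noteq> \<infinity>"
  shows "chord_condition (\<lambda>t. rf (x + t *\<^sub>R (y - x)))"
  unfolding chord_condition_def
proof (intro allI impI)
  fix a b u w :: real
  assume au: "a < u" and ub: "u < b" and w: "w < a \<or> b < w"
  define \<phi> where "\<phi> t = rf (x + t *\<^sub>R (y - x))" for t
  define s where "s = (u - a) / (b - a)"
  define s' where "s' = (w - a) / (b - a)"
  have D: "b - a > 0" using au ub by simp
  have s: "0 < s" "s < 1" using au ub by (auto simp: s_def field_simps)
  have s': "s' < 0 \<or> 1 < s'" using w D by (auto simp: s'_def field_simps)
  have us: "u = a + s * (b - a)" and ws: "w = a + s' * (b - a)" using D by (auto simp: s_def s'_def)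
  have "f (x + a *\<^sub>R (y - x)) \<noteq> \<infinity>" "f (x + b *\<^sub>R (y - x)) \<noteq> \<infinity>"
    using f_line_finite[OF fx fy] by auto
  from outside_segment(2)[OF this s s']
  have "s * (1 - s) * \<phi> w + s' * (s' - 1) * \<phi> u
      \<le> s * (1 - s) * ((1 - s') * \<phi> a + s' * \<phi> b) + s' * (s' - 1) * ((1 - s) * \<phi> a + s * \<phi> b)"
    unfolding line_point_reparam \<phi>_def us ws .
  then have "(b - a) ^ 3 * ((s * (1 - s) * \<phi> w + s' * (s' - 1) * \<phi> u)
      - (s * (1 - s) * ((1 - s') * \<phi> a + s' * \<phi> b) + s' * (s' - 1) * ((1 - s) * \<phi> a + s * \<phi> b))) \<le> 0"
    using D by (intro mult_nonneg_nonpos) auto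
  then have "chord_defect \<phi> a b u w \<le> 0"
    unfolding chord_defect_def us ws by (simp add: algebra_simps power3_eq_cube)
  then show "chord_defect (\<lambda>t. rf (x + t *\<^sub>R (y - x))) a b u w \<le> 0"
    unfolding \<phi>_def[abs_def] .
qed

definition curv :: "'a \<Rightarrow> 'a \<Rightarrow> real" where
  "curv x y = (rf x - 2 * rf y + rf (x + 2 *\<^sub>R (y - x))) / 2"

lemma f_on_line:
  assumes "f x \<noteq> \<infinity>" "f y \<noteq> \<infinity>"
  shows "rf (x + t *\<^sub>R (y - x)) = (1 - t) * rf x + t * rf y + (t * t - t) * curv x y"
  using chord_condition_imp_quadratic[OF chord_condition_on_line[OF assms], of t]
  by (simp add: curv_def algebra_simps)

lemma Q_tendsto_curv:
  assumes X: "recovery X x a" and Y: "recovery Y y b"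
  shows "(\<lambda>k. Q k (Y k - X k)) \<longlonglongrightarrow> curv x y"
proof (rule tendstoI)
  fix e :: real assume e: "e > 0"
  have fx: "f x \<noteq> \<infinity>" and fy: "f y \<noteq> \<infinity>" and lim: "X \<longlonglongrightarrow> x" "Y \<longlonglongrightarrow> y" "a \<longlonglongrightarrow> rf x" "b \<longlonglongrightarrow> rf y"
    using X Y by (auto simp: recovery_def)
  define zh where "zh = x + (1/2) *\<^sub>R (y - x)"
  define z2 where "z2 = x + 2 *\<^sub>R (y - x)"
  have fin: "f zh \<noteq> \<infinity>" "f z2 \<noteq> \<infinity>" unfolding zh_def z2_def using f_line_finite fx fy by auto
  have rzh: "rf zh = rf x / 2 + rf y / 2 - curv x y / 4"
    unfolding zh_def using f_on_line[OF fx fy, of "1/2"] by simp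
  have rz2: "rf z2 = - rf x + 2 * rf y + 2 * curv x y"
    unfolding z2_def using f_on_line[OF fx fy, of 2] by simp
  have "eventually (\<lambda>k. ereal (rf zh - e/16) < F k (X k + (1/2) *\<^sub>R (Y k - X k))) sequentially"
    by (rule epiconverges_eventually_gt[OF epi tendsto_line_point[OF lim(1,2)]])
      (use f_eq_rf[OF fin(1)] e in \<open>simp add: zh_def\<close>)
  moreover have "eventually (\<lambda>k. ereal (rf z2 - e/16) < F k (X k + 2 *\<^sub>R (Y k - X k))) sequentially"
    by (rule epiconverges_eventually_gt[OF epi tendsto_line_point[OF lim(1,2)]])
      (use f_eq_rf[OF fin(2)] e in \<open>simp add: z2_def\<close>)
  moreover have "eventually (\<lambda>k. dist (a k) (rf x) < e/16) sequentially"
    "eventually (\<lambda>k. dist (b k) (rf y) < e/16) sequentially"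
    using tendstoD[OF lim(3), of "e/16"] tendstoD[OF lim(4), of "e/16"] e by simp_all
  ultimately show "eventually (\<lambda>k. dist (Q k (Y k - X k)) (curv x y) < e) sequentially"
    using recovery_line_eq[OF X Y]
  proof eventually_elim
    case (elim k)
    have "rf zh - e/16 < a k / 2 + b k / 2 - Q k (Y k - X k) / 4"
      using elim(1) elim(5)[rule_format, of "1/2"] by simp
    moreover have "rf z2 - e/16 < - a k + 2 * b k + 2 * Q k (Y k - X k)"
      using elim(2) elim(5)[rule_format, of 2] by simp
    moreover have "\<bar>a k - rf x\<bar> < e/16" "\<bar>b k - rf y\<bar> < e/16"
      using elim(3,4) by (simp_all add: dist_real_def)
    ultimately show ?case
      unfolding dist_real_def abs_less_iff using rzh rz2 by linarith
  qed
qed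

lemma recovery_line:
  assumes X: "recovery X x a" and Y: "recovery Y y b"
  shows "recovery (\<lambda>k. X k + t *\<^sub>R (Y k - X k)) (x + t *\<^sub>R (y - x))
    (\<lambda>k. (1 - t) * a k + t * b k + (t * t - t) * Q k (Y k - X k))"
proof -
  have fx: "f x \<noteq> \<infinity>" and fy: "f y \<noteq> \<infinity>" and lim: "X \<longlonglongrightarrow> x" "Y \<longlonglongrightarrow> y" "a \<longlonglongrightarrow> rf x" "b \<longlonglongrightarrow> rf y"
    using X Y by (auto simp: recovery_def)
  have "(\<lambda>k. (1 - t) * a k + t * b k + (t * t - t) * Q k (Y k - X k))
      \<longlonglongrightarrow> (1 - t) * rf x + t * rf y + (t * t - t) * curv x y"
    using lim(3,4) Q_tendsto_curv[OF X Y] by (intro tendsto_intros)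
  then show ?thesis
    unfolding recovery_def f_on_line[OF fx fy]
    using tendsto_line_point[OF lim(1,2)] f_line_finite[OF fx fy] recovery_line_eq[OF X Y]
    by (auto elim: eventually_mono)
qed

lemma curv_nonneg:
  assumes "f x \<noteq> \<infinity>" "f y \<noteq> \<infinity>"
  shows "0 \<le> curv x y"
proof -
  obtain X a Y b where "recovery X x a" "recovery Y y b"
    using obtain_recovery assms by metis
  from Q_tendsto_curv[OF this] show ?thesis by (rule tendsto_lowerbound) (simp_all add: Q_nonneg)
qed

lemma curv_translate:
  assumes fx: "f x \<noteq> \<infinity>" and fy: "f y \<noteq> \<infinity>" and fx': "f x' \<noteq> \<infinity>"
  shows "curv x' (x' + (y - x)) = curv x y"
proof -
  obtain X a Y b X' a' where X: "recovery X x a" and Y: "recovery Y y b" and X': "recovery X' x' a'"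
    using obtain_recovery fx fy fx' by metis
  \<comment> \<open>a recovery sequence for x' + (y - x) whose differences with X' are exactly Y - X\<close>
  define M where "M k = X' k + (1/2) *\<^sub>R (Y k - X' k)" for k
  obtain cm where M: "recovery M (x' + (1/2) *\<^sub>R (y - x')) cm"
    using recovery_line[OF X' Y, of "1/2"] unfolding M_def by blast
  obtain cy where Y': "recovery (\<lambda>k. X k + 2 *\<^sub>R (M k - X k)) (x + 2 *\<^sub>R ((x' + (1/2) *\<^sub>R (y - x')) - x)) cy"
    using recovery_line[OF X M, of 2] by blast
  have "x + 2 *\<^sub>R ((x' + (1/2) *\<^sub>R (y - x')) - x) = x' + (y - x)"
    by (simp add: algebra_simps scaleR_2)
  moreover have "(X k + 2 *\<^sub>R (M k - X k)) - X' k = Y k - X k" for k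
    by (simp add: M_def algebra_simps scaleR_2)
  ultimately have "(\<lambda>k. Q k (Y k - X k)) \<longlonglongrightarrow> curv x' (x' + (y - x))"
    using Q_tendsto_curv[OF X' Y'] by simp
  then show ?thesis using Q_tendsto_curv[OF X Y] by (rule LIMSEQ_unique)
qed

lemma quadratic_on_shifted_domain:
  assumes fp: "f p \<noteq> \<infinity>"
  shows "quadratic_on_subspace {h. f (p + h) \<noteq> \<infinity>} (\<lambda>h. rf (p + h)) (\<lambda>h. curv p (p + h))"
proof
  let ?V = "{h. f (p + h) \<noteq> \<infinity>}"
  have scale: "t *\<^sub>R h \<in> ?V" if "h \<in> ?V" for h t
    using f_line_finite[OF fp, of "p + h" t] that by simp
  have add: "h + k \<in> ?V" if "h \<in> ?V" "k \<in> ?V" for h k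
  proof -
    have "f (p + h + (1/2) *\<^sub>R ((p + k) - (p + h))) \<noteq> \<infinity>"
      using f_line_finite that by blast
    from f_line_finite[OF fp this, of 2] show ?thesis
      by (simp add: algebra_simps scaleR_2)
  qed
  show "subspace ?V"
    unfolding subspace_def using fp add scale by simp
  fix x d t assume x: "x \<in> ?V" and d: "d \<in> ?V"
  have "f (p + x + d) \<noteq> \<infinity>" "f (p + d) \<noteq> \<infinity>" using add[OF x d] d by (simp_all add: add.assoc)
  then show "rf (p + (x + t *\<^sub>R d)) = (1 - t) * rf (p + x) + t * rf (p + (x + d)) + (t * t - t) * curv p (p + d)"
    using f_on_line[of "p + x" "p + x + d" t] curv_translate[OF fp _ x[simplified], of "p + d"] x
    by (simp add: add.assoc)
qed

lemma f_uminus: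
  assumes even: "\<And>k x. F k (- x) = F k x"
  shows "f (- x) = f x"
proof -
  have le: "f (- z) \<le> f z" for z
  proof (cases "f z = \<infinity>")
    case False
    then obtain Z c where Z: "recovery Z z c" using obtain_recovery by blast
    have "f (- z) \<le> ereal (rf z)"
      using Z unfolding recovery_def
      by (intro epiconverges_le_liminf[OF epi tendsto_minus, of Z z c] eventually_frequently)
        (auto simp: even elim: eventually_mono)
    then show ?thesis using f_eq_rf[OF False] by simp
  qed simp
  show ?thesis using le[of x] le[of "- x"] by simp
qed

end

lemma epi_limit_quadratic_representation:
  fixes F :: "nat \<Rightarrow> real^'n::finite \<Rightarrow> ereal"
  assumes "epi_limit_quadratic F Q f" and fp: "f p \<noteq> \<infinity>"
  obtains A b c where "mms_relation A" "f = (\<lambda>x. qA A (x - p) + ereal (inner b x) + ereal c)"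
proof -
  interpret epi_limit_quadratic F Q f by fact
  let ?V = "{h. f (p + h) \<noteq> \<infinity>}"
  interpret g: quadratic_on_subspace ?V "\<lambda>h. rf (p + h)" "\<lambda>h. curv p (p + h)"
    using quadratic_on_shifted_domain[OF fp] .
  interpret psd_form ?V g.B
  proof
    fix h assume "h \<in> ?V"
    then show "0 \<le> g.B h h" using g.B_diag curv_nonneg[OF fp] by simp
  qed (use g.subspace g.B_add_right g.B_scale_right g.B_commute in blast)+
  obtain b where b: "\<And>h. h \<in> ?V \<Longrightarrow> inner b h = g.L h"
    using subspace_functional_eq_inner[OF g.subspace g.L_add g.L_scale] by blast
  have "f x = qA graph (x - p) + ereal (inner b x) + ereal (rf p - inner b p)" for x
  proof (cases "x - p \<in> ?V")
    case True
    then have "f x = ereal (rf (p + (x - p)))" using f_eq_rf by simp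
    also have "rf (p + (x - p)) = rf p + inner b (x - p) + g.B (x - p) (x - p) / 2"
      using g.g_eq[OF True] b[OF True] by simp
    finally show ?thesis using True by (simp add: qA_graph inner_diff_right)
  next
    case False
    then show ?thesis by (simp add: qA_graph)
  qed
  then show thesis by (intro that[OF mms_relation_graph] ext)
qed

lemma epi_limit_quadratic_even_representation:
  fixes F :: "nat \<Rightarrow> real^'n::finite \<Rightarrow> ereal"
  assumes "epi_limit_quadratic F Q f" and even: "\<And>k x. F k (- x) = F k x"
  obtains A c where "mms_relation A" "f = (\<lambda>x. qA A x + ereal c)"
proof -
  interpret epi_limit_quadratic F Q f by fact
  obtain x0 where "f x0 \<noteq> \<infinity>" using proper by (auto simp: proper_fun_def)
  moreover have "f (- x0) \<noteq> \<infinity>" using calculation f_uminus[OF even] by simp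
  ultimately have "f (x0 + (1/2) *\<^sub>R (- x0 - x0)) \<noteq> \<infinity>" by (rule f_line_finite)
  then have "f 0 \<noteq> \<infinity>" by (simp add: scaleR_2 flip: scaleR_add_right)
  then obtain A b c where A: "mms_relation A" and f: "f = (\<lambda>x. qA A (x - 0) + ereal (inner b x) + ereal c)"
    by (rule epi_limit_quadratic_representation[OF assms(1)])
  then have f: "f = (\<lambda>x. qA A x + ereal (inner b x) + ereal c)" by simp
  have sub: "subspace A" "symmetric_op A" using A by (simp_all add: mms_relation_def linear_relation_def)
  have "f x = qA A x + ereal c" for x
  proof (cases "qA A x = \<infinity>")
    case False
    have "qA A x + ereal (- inner b x) + ereal c = qA A x + ereal (inner b x) + ereal c"
      using f_uminus[OF even, of x] qA_uminus[OF sub, of x] unfolding f by simp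
    moreover have "qA A x \<noteq> -\<infinity>" by (simp add: qA_def)
    ultimately have "inner b x = 0" using False by (cases "qA A x") auto
    then show ?thesis by (simp add: f)
  qed (simp add: f)
  with A show thesis by (intro that) auto
qed

lemma epi_limit_quadratic_qA:
  assumes "\<And>k. mms_relation (A k)" and "epiconverges (\<lambda>k x. qA (A k) (x - a k) + ereal (inner (b k) x) + ereal (c k)) f"
    and "proper_fun f"
  shows "epi_limit_quadratic (\<lambda>k x. qA (A k) (x - a k) + ereal (inner (b k) x) + ereal (c k))
    (\<lambda>k d. real_of_ereal (qA (A k) d)) f"
  using assms by unfold_locales
    (auto intro: quadratic_along_lines_qA simp: mms_relation_def maximally_monotone_def)

theorem proposition5p7:
  shows "(\<forall>(A :: nat \<Rightarrow> ((real^('n::finite)) \<times> (real^'n)) set) a b c f.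
            (\<forall>k. mms_relation (A k)) \<and>
            epiconverges (\<lambda>k x. qA (A k) (x - a k) + ereal (inner (b k) x) + ereal (c k)) f \<and>
            proper_fun f
          \<longrightarrow> (\<exists>A0 a0 b0 c0. mms_relation A0 \<and>
                 f = (\<lambda>x. qA A0 (x - a0) + ereal (inner b0 x) + ereal c0)))
       \<and> (\<forall>(A :: nat \<Rightarrow> ((real^'n) \<times> (real^'n)) set) c f.
            (\<forall>k. mms_relation (A k)) \<and>
            epiconverges (\<lambda>k x. qA (A k) x + ereal (c k)) f \<and>
            proper_fun f
          \<longrightarrow> (\<exists>A0 c0. mms_relation A0 \<and> f = (\<lambda>x. qA A0 x + ereal c0)))"
proof (intro conjI allI impI; elim conjE)
  fix A :: "nat \<Rightarrow> ((real^('n::finite)) \<times> (real^'n)) set" and a b c f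
  assume "\<forall>k. mms_relation (A k)"
    and "epiconverges (\<lambda>k x. qA (A k) (x - a k) + ereal (inner (b k) x) + ereal (c k)) f"
    and "proper_fun f"
  then have lim: "epi_limit_quadratic (\<lambda>k x. qA (A k) (x - a k) + ereal (inner (b k) x) + ereal (c k))
      (\<lambda>k d. real_of_ereal (qA (A k) d)) f"
    by (intro epi_limit_quadratic_qA) simp_all
  from \<open>proper_fun f\<close> obtain p where "f p \<noteq> \<infinity>" by (auto simp: proper_fun_def)
  from epi_limit_quadratic_representation[OF lim this]
  show "\<exists>A0 a0 b0 c0. mms_relation A0 \<and> f = (\<lambda>x. qA A0 (x - a0) + ereal (inner b0 x) + ereal c0)"
    by blast
next
  fix A :: "nat \<Rightarrow> ((real^('n::finite)) \<times> (real^'n)) set" and c f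
  assume mms: "\<forall>k. mms_relation (A k)" and "epiconverges (\<lambda>k x. qA (A k) x + ereal (c k)) f"
    and "proper_fun f"
  then have lim: "epi_limit_quadratic (\<lambda>k x. qA (A k) (x - 0) + ereal (inner 0 x) + ereal (c k))
      (\<lambda>k d. real_of_ereal (qA (A k) d)) f"
    by (intro epi_limit_quadratic_qA) simp_all
  have "qA (A k) (- x - 0) + ereal (inner 0 (- x)) + ereal (c k)
      = qA (A k) (x - 0) + ereal (inner 0 x) + ereal (c k)" for k x
    using mms qA_uminus[of "A k" x] by (simp add: mms_relation_def linear_relation_def)
  from epi_limit_quadratic_even_representation[OF lim this]
  show "\<exists>A0 c0. mms_relation A0 \<and> f = (\<lambda>x. qA A0 x + ereal c0)" by blast
qed

end
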